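(* Assume (A1) and (A2). For each $\theta\in\Theta$ the series $\widehat H_\theta=\sum_{n\ge0}\big(P_\theta^nH(\cdot,\theta)-h(\theta)\big)$ converges uniformly on $\mathsf X$ and $\widehat H_\theta$ solves the Poisson equation $\widehat H_\theta-P_\theta\widehat H_\theta=H(\cdot,\theta)-h(\theta)$. Moreover $\sup_{\theta\in\Theta,x\in\mathsf X}|\widehat H_\theta(x)|<\infty$, and there exists a constant $C>0$ such that for all $\theta,\theta'\in\Theta$, $$\sup_{x\in\mathsf X}\Big\{\big|\widehat H_\theta(x)-\widehat H_{\theta'}(x)\big|+\big|P_\theta\widehat H_\theta(x)-P_{\theta'}\widehat H_{\theta'}(x)\big|\Big\}\le C\,\frac{|\theta-\theta'|}{\min_{1\le i\le d}\{\theta(i)\wedge\theta'(i)\}}.$$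
   Context: Setting: $(\mathsf X,\mathcal X)$ Polish space with Borel $\sigma$-algebra and $\sigma$-finite reference measure $\lambda$; $\pi$ a probability density w.r.t. $\lambda$; $d\ge2$; $\mathsf X_1,\dots,\mathsf X_d$ a measurable partition of $\mathsf X$; $I(x)=i$ iff $x\in\mathsf X_i$; $\theta_\star(i)=\int_{\mathsf X_i}\pi\,d\lambda$; $\Theta=\{\theta\in(0,1)^d:\sum_i\theta(i)=1\}$; $\pi_\theta(x)=\big(\sum_{i}\theta_\star(i)/\theta(i)\big)^{-1}\sum_{i}\frac{\pi(x)}{\theta(i)}\mathbf 1_{\mathsf X_i}(x)$; $H_i(x,\theta)=\theta(i)(\mathbf 1_{\mathsf X_i}(x)-\theta(I(x)))$ (vector-valued, components handled coordinatewise), $h(\theta)=\int H(x,\theta)\pi_\theta(x)\lambda(dx)$; $|\cdot|$ is the Euclidean norm. (A1): $0<\inf\pi\le\sup\pi<\infty$ and $\min_i\theta_\star(i)>0$. (A2): $P_\theta$ is the Metropolis–Hastings kernel with target $\pi_\theta\,d\lambda$, symmetric proposal density $q$ w.r.t. $\lambda$ with $\inf_{\mathsf X^2}q>0$, acceptance $1\wedge\pi_\theta(y)/\pi_\theta(x)$. *)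

theory Defs
  imports "HOL-Probability.Probability"
begin

definition cellidx :: "('d::finite \<Rightarrow> 'a set) \<Rightarrow> 'a \<Rightarrow> 'd" where
  "cellidx Xs x = (THE i. x \<in> Xs i)"

definition theta_star :: "'a measure \<Rightarrow> ('a \<Rightarrow> real) \<Rightarrow> ('d::finite \<Rightarrow> 'a set) \<Rightarrow> real^'d" where
  "theta_star lam p Xs = (\<chi> i. (\<integral>x\<in>Xs i. p x \<partial>lam))"

definition Theta :: "(real^'d::finite) set" where
  "Theta = {\<theta>. (\<forall>i. 0 < \<theta>$i \<and> \<theta>$i < 1) \<and> (\<Sum>i\<in>UNIV. \<theta>$i) = 1}"

definition pi_theta :: "'a measure \<Rightarrow> ('a \<Rightarrow> real) \<Rightarrow> ('d::finite \<Rightarrow> 'a set) \<Rightarrow> real^'d \<Rightarrow> 'a \<Rightarrow> real" where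
  "pi_theta lam p Xs \<theta> x =
     inverse (\<Sum>i\<in>UNIV. theta_star lam p Xs $ i / \<theta>$i) *
     (\<Sum>i\<in>UNIV. p x / \<theta>$i * indicator (Xs i) x)"

definition Hfun :: "('d::finite \<Rightarrow> 'a set) \<Rightarrow> 'a \<Rightarrow> real^'d \<Rightarrow> real^'d" where
  "Hfun Xs x \<theta> = (\<chi> i. \<theta>$i * (indicator (Xs i) x - \<theta>$(cellidx Xs x)))"

definition hmean :: "'a measure \<Rightarrow> ('a \<Rightarrow> real) \<Rightarrow> ('d::finite \<Rightarrow> 'a set) \<Rightarrow> real^'d \<Rightarrow> real^'d" where
  "hmean lam p Xs \<theta> = (\<integral>x. pi_theta lam p Xs \<theta> x *\<^sub>R Hfun Xs x \<theta> \<partial>lam)"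

text \<open>Metropolis--Hastings kernel P_theta with target pi_theta d lambda and proposal
  density q, acting on a (bounded measurable) real function f:
  P f(x) = int f(y) alpha(x,y) q(x,y) lambda(dy) + (1 - int alpha(x,y) q(x,y) lambda(dy)) f(x),
  with alpha(x,y) = 1 min pi_theta(y)/pi_theta(x).\<close>
definition MH_accept :: "'a measure \<Rightarrow> ('a \<Rightarrow> real) \<Rightarrow> ('d::finite \<Rightarrow> 'a set) \<Rightarrow> real^'d \<Rightarrow> 'a \<Rightarrow> 'a \<Rightarrow> real" where
  "MH_accept lam p Xs \<theta> x y = min 1 (pi_theta lam p Xs \<theta> y / pi_theta lam p Xs \<theta> x)"

definition MH_op :: "'a measure \<Rightarrow> ('a \<Rightarrow> real) \<Rightarrow> ('d::finite \<Rightarrow> 'a set) \<Rightarrow> ('a \<Rightarrow> 'a \<Rightarrow> real)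
    \<Rightarrow> real^'d \<Rightarrow> ('a \<Rightarrow> real) \<Rightarrow> 'a \<Rightarrow> real" where
  "MH_op lam p Xs q \<theta> f x =
     (\<integral>y. f y * MH_accept lam p Xs \<theta> x y * q x y \<partial>lam)
     + (1 - (\<integral>y. MH_accept lam p Xs \<theta> x y * q x y \<partial>lam)) * f x"

definition MH_vec :: "'a measure \<Rightarrow> ('a \<Rightarrow> real) \<Rightarrow> ('d::finite \<Rightarrow> 'a set) \<Rightarrow> ('a \<Rightarrow> 'a \<Rightarrow> real)
    \<Rightarrow> real^'d \<Rightarrow> ('a \<Rightarrow> real^'d) \<Rightarrow> 'a \<Rightarrow> real^'d" where
  "MH_vec lam p Xs q \<theta> F x = (\<chi> i. MH_op lam p Xs q \<theta> (\<lambda>y. F y $ i) x)"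

definition Hterm :: "'a measure \<Rightarrow> ('a \<Rightarrow> real) \<Rightarrow> ('d::finite \<Rightarrow> 'a set) \<Rightarrow> ('a \<Rightarrow> 'a \<Rightarrow> real)
    \<Rightarrow> real^'d \<Rightarrow> nat \<Rightarrow> 'a \<Rightarrow> real^'d" where
  "Hterm lam p Xs q \<theta> n =
     (\<lambda>x. (MH_vec lam p Xs q \<theta> ^^ n) (\<lambda>y. Hfun Xs y \<theta>) x - hmean lam p Xs \<theta>)"

definition Hhat :: "'a measure \<Rightarrow> ('a \<Rightarrow> real) \<Rightarrow> ('d::finite \<Rightarrow> 'a set) \<Rightarrow> ('a \<Rightarrow> 'a \<Rightarrow> real)
    \<Rightarrow> real^'d \<Rightarrow> 'a \<Rightarrow> real^'d" where
  "Hhat lam p Xs q \<theta> x = (\<Sum>n. Hterm lam p Xs q \<theta> n x)"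

end

theory Submission
  imports Defs
begin

text \<open>
  Uniformly in \<open>\<theta> \<in> Theta\<close>, the kernels \<open>P \<theta>\<close> satisfy a Doeblin minorisation: the density of
  accepted moves dominates \<open>doeblin * \<pi>\<^sub>\<theta>\<close>, because \<open>\<pi>\<^sub>\<theta>\<close> is bounded above and the proposal density
  is bounded below. Hence \<open>P \<theta>\<close> contracts bounded \<open>\<pi>\<^sub>\<theta>\<close>-centred functions by the factor
  \<open>1 - doeblin\<close> in the sup norm, the series \<open>\<Sum>n. P\<^sub>\<theta>\<^sup>n (H - h)\<close> converges geometrically and
  uniformly, and its sum solves the Poisson equation.

  For the Lipschitz bound, the acceptance probabilities, the kernels and the targets \<open>\<pi>\<^sub>\<theta>\<close> all move
  by \<open>O(|\<theta> - \<theta>'| / min\<^sub>i min (\<theta> i) (\<theta>' i))\<close> (the minimum enters when dividing by \<open>\<theta> i\<close>). The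
  difference of two Poisson solutions solves a Poisson equation for \<open>P \<theta>\<close> whose right-hand side and
  mean are of that order, and the contraction bounds it.
\<close>

lemma min_one_mult_diff_le:
  fixes c u v :: real
  assumes "0 \<le> c" "0 < u" "0 < v"
  shows "\<bar>min 1 (c * u) - min 1 (c * v)\<bar> \<le> \<bar>u - v\<bar> / max u v"
proof -
  have "\<bar>min 1 (c * a) - min 1 (c * b)\<bar> \<le> \<bar>a - b\<bar> / max a b" if "0 < a" "a \<le> b" for a b
  proof -
    have ca: "c * a \<le> c * b" using assms(1) that by (simp add: mult_left_mono)
    then have mono: "min 1 (c * a) \<le> min 1 (c * b)" by (rule min.mono[OF order_refl])
    have "min 1 (c * b) - min 1 (c * a) \<le> (b - a) / b"
    proof (cases "c * b \<le> 1")
      case True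
      then have "c \<le> 1 / b" using that by (simp add: field_simps)
      then have "c * (b - a) \<le> (b - a) / b"
        using that by (metis mult_right_mono diff_ge_0_iff_ge times_divide_eq_left mult_1)
      then show ?thesis using True ca by (simp add: right_diff_distrib)
    next
      case False
      then have "a / b \<le> c * a" using that by (simp add: field_simps)
      moreover have "(b - a) / b = 1 - a / b" "a / b \<le> 1" using that by (simp_all add: field_simps)
      ultimately show ?thesis using False by (simp add: min_def)
    qed
    then show ?thesis using mono that by (simp add: max_def)
  qed
  from this[of u v] this[of v u] show ?thesis
    using assms by (cases "u \<le> v") (auto simp: abs_minus_commute max.commute)
qed

lemma min_one_divide_diff_le:
  fixes c u v :: real
  assumes "0 \<le> c" "0 < u" "0 < v"
  shows "\<bar>min 1 (c / u) - min 1 (c / v)\<bar> \<le> \<bar>u - v\<bar> / max u v"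
proof -
  have "c / u = c / (u * v) * v" "c / v = c / (u * v) * u" using assms by (simp_all add: field_simps)
  then show ?thesis
    using min_one_mult_diff_le[of "c / (u * v)" v u] assms by (simp add: abs_minus_commute max.commute)
qed

lemma sum_abs_normalised_diff_le:
  fixes a b :: "'i \<Rightarrow> real"
  assumes "finite I" "\<And>i. i \<in> I \<Longrightarrow> 0 \<le> b i" "0 < sum a I" "0 < sum b I"
  shows "(\<Sum>i\<in>I. \<bar>a i / sum a I - b i / sum b I\<bar>) \<le> 2 * (\<Sum>i\<in>I. \<bar>a i - b i\<bar>) / sum a I"
proof -
  let ?A = "sum a I" and ?B = "sum b I"
  have "\<bar>a i / ?A - b i / ?B\<bar> \<le> \<bar>a i - b i\<bar> / ?A + b i * \<bar>1 / ?A - 1 / ?B\<bar>" if "i \<in> I" for i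
  proof -
    have "a i / ?A - b i / ?B = (a i - b i) / ?A + b i * (1 / ?A - 1 / ?B)"
      using assms(3,4) by (simp add: field_simps)
    then show ?thesis
      using assms(2)[OF that] assms(3) abs_triangle_ineq[of "(a i - b i) / ?A" "b i * (1 / ?A - 1 / ?B)"]
      by (simp add: abs_mult)
  qed
  then have "(\<Sum>i\<in>I. \<bar>a i / ?A - b i / ?B\<bar>) \<le> (\<Sum>i\<in>I. \<bar>a i - b i\<bar> / ?A + b i * \<bar>1 / ?A - 1 / ?B\<bar>)"
    by (rule sum_mono)
  also have "\<dots> = (\<Sum>i\<in>I. \<bar>a i - b i\<bar>) / ?A + ?B * \<bar>1 / ?A - 1 / ?B\<bar>"
    by (simp add: sum.distrib sum_divide_distrib sum_distrib_right)
  also have "?B * \<bar>1 / ?A - 1 / ?B\<bar> = \<bar>?A - ?B\<bar> / ?A"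
    using assms(3,4) by (simp add: abs_mult_pos[symmetric] field_simps abs_minus_commute)
  also have "\<bar>?A - ?B\<bar> \<le> (\<Sum>i\<in>I. \<bar>a i - b i\<bar>)"
    unfolding sum_subtractf[symmetric] by (rule sum_abs)
  finally show ?thesis
    using assms(3) by (simp add: divide_right_mono)
qed

lemma norm_le_card_mult_cart:
  fixes x :: "real^'n"
  assumes "\<And>i. \<bar>x $ i\<bar> \<le> c"
  shows "norm x \<le> real CARD('n) * c"
proof -
  have "norm x \<le> (\<Sum>i\<in>UNIV. \<bar>x $ i\<bar>)" by (rule norm_le_l1_cart)
  also have "\<dots> \<le> (\<Sum>i\<in>(UNIV::'n set). c)" by (rule sum_mono) (rule assms)
  finally show ?thesis by simp
qed

lemma
  fixes r B :: real
  assumes "0 \<le> r" "r < 1"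
  shows summable_geometric_tail: "summable (\<lambda>n. r ^ (n + N) * B)"
    and suminf_geometric_tail: "(\<Sum>n. r ^ (n + N) * B) = r ^ N * B / (1 - r)"
proof -
  have geom: "(\<lambda>n. r ^ n) sums (1 / (1 - r))" using assms by (intro geometric_sums) simp
  have "(\<lambda>n. (r ^ N * B) * r ^ n) sums ((r ^ N * B) * (1 / (1 - r)))"
    by (rule sums_mult[OF geom])
  then have "(\<lambda>n. r ^ (n + N) * B) sums (r ^ N * B / (1 - r))"
    by (simp add: power_add mult_ac)
  then show "summable (\<lambda>n. r ^ (n + N) * B)" "(\<Sum>n. r ^ (n + N) * B) = r ^ N * B / (1 - r)"
    by (simp_all add: sums_iff)
qed

lemma le_of_le_plus_geometric:
  fixes x a c r :: real
  assumes "\<And>N. x \<le> a + r ^ N * c" "0 \<le> r" "r < 1"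
  shows "x \<le> a"
proof -
  have "(\<lambda>N. a + r ^ N * c) \<longlonglongrightarrow> a + 0 * c"
    using assms(2,3) by (intro tendsto_intros LIMSEQ_power_zero) simp
  then show ?thesis using assms(1) by (intro LIMSEQ_le_const) auto
qed

lemma integrable_bounded_mult:
  fixes f w :: "'a \<Rightarrow> real"
  assumes "integrable M w" "f \<in> borel_measurable M" "\<And>x. \<bar>f x\<bar> \<le> B"
  shows "integrable M (\<lambda>x. f x * w x)"
proof (rule Bochner_Integration.integrable_bound)
  show "integrable M (\<lambda>x. B * w x)" using assms(1) by simp
  have "\<bar>f x\<bar> * \<bar>w x\<bar> \<le> \<bar>B\<bar> * \<bar>w x\<bar>" for x
    using assms(3)[of x] by (intro mult_right_mono) auto
  then show "AE x in M. norm (f x * w x) \<le> norm (B * w x)"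
    by (simp add: abs_mult)
qed (use assms in simp)

lemma abs_integral_bounded_mult_le:
  fixes f w :: "'a \<Rightarrow> real"
  assumes "integrable M w" "\<And>x. 0 \<le> w x" "f \<in> borel_measurable M" "\<And>x. \<bar>f x\<bar> \<le> B"
  shows "\<bar>\<integral>x. f x * w x \<partial>M\<bar> \<le> B * (\<integral>x. w x \<partial>M)"
proof -
  have "\<bar>\<integral>x. f x * w x \<partial>M\<bar> \<le> (\<integral>x. \<bar>f x * w x\<bar> \<partial>M)"
    by (rule integral_abs_bound)
  also have "\<dots> \<le> (\<integral>x. B * w x \<partial>M)"
    using integrable_abs[OF integrable_bounded_mult[OF assms(1,3,4)]] assms(1,2,4)
    by (intro integral_mono) (auto simp: abs_mult intro!: mult_right_mono)
  finally show ?thesis by simp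
qed

lemma abs_integral_le_integral:
  fixes f w :: "'a \<Rightarrow> real"
  assumes "integrable M f" "integrable M w" "\<And>x. \<bar>f x\<bar> \<le> w x"
  shows "\<bar>\<integral>x. f x \<partial>M\<bar> \<le> (\<integral>x. w x \<partial>M)"
  by (rule order_trans[OF integral_abs_bound integral_mono[OF integrable_abs[OF assms(1)] assms(2,3)]])

locale mh_setting =
  fixes lam :: "'a measure" and p :: "'a \<Rightarrow> real" and Xs :: "'d::finite \<Rightarrow> 'a set"
    and q :: "'a \<Rightarrow> 'a \<Rightarrow> real"
  assumes lam_sf: "sigma_finite_measure lam"
    and p_meas[measurable]: "p \<in> borel_measurable lam"
    and p_nonneg: "\<And>x. 0 \<le> p x"
    and p_int: "integrable lam p"
    and Xs_meas[measurable]: "\<And>i. Xs i \<in> sets lam"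
    and Xs_disj: "\<And>i j. i \<noteq> j \<Longrightarrow> Xs i \<inter> Xs j = {}"
    and Xs_cover: "(\<Union>i. Xs i) = UNIV"
    and A1_inf: "\<exists>c>0. \<forall>x. c \<le> p x"
    and A1_sup: "\<exists>C. \<forall>x. p x \<le> C"
    and A1_ts: "\<And>i. 0 < theta_star lam p Xs $ i"
    and q_meas[measurable]: "(\<lambda>(x, y). q x y) \<in> borel_measurable (lam \<Otimes>\<^sub>M lam)"
    and q_sym: "\<And>x y. q x y = q y x"
    and q_nonneg: "\<And>x y. 0 \<le> q x y"
    and q_int: "\<And>x. integrable lam (q x)"
    and q_dens: "\<And>x. (\<integral>y. q x y \<partial>lam) = 1"
    and q_inf: "\<exists>c>0. \<forall>x y. c \<le> q x y"
begin

sublocale sigma_finite_measure lam by (rule lam_sf)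
sublocale PS: pair_sigma_finite lam lam by unfold_locales

abbreviation "ts \<equiv> theta_star lam p Xs"
abbreviation "pit \<equiv> pi_theta lam p Xs"
abbreviation "P \<equiv> MH_op lam p Xs q"

definition "normalizer \<theta> = (\<Sum>i\<in>UNIV. ts $ i / \<theta> $ i)"
definition "pi_int \<theta> f = (\<integral>x. pit \<theta> x * f x \<partial>lam)"
definition "bounded_meas (f::'a \<Rightarrow> real) \<longleftrightarrow> f \<in> borel_measurable lam \<and> (\<exists>B. \<forall>x. \<bar>f x\<bar> \<le> B)"

definition "q_min = (SOME c. c > 0 \<and> (\<forall>x y. c \<le> q x y))"
definition "p_max = (SOME C. \<forall>x. p x \<le> C)"
definition "ts_min = Min (range (\<lambda>i. ts $ i))"
definition "pi_max = p_max / ts_min"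

lemma q_min: "q_min > 0" "\<And>x y. q_min \<le> q x y"
  using someI_ex[OF q_inf] unfolding q_min_def by auto

lemma p_max: "\<And>x. p x \<le> p_max"
  using someI_ex[OF A1_sup] unfolding p_max_def by auto

lemma p_pos: "0 < p x"
  using A1_inf by (auto intro: less_le_trans)

lemma ts_min: "ts_min > 0" "\<And>i. ts_min \<le> ts $ i"
proof -
  have "ts_min \<in> range (\<lambda>i. ts $ i)" unfolding ts_min_def by (rule Min_in) auto
  then show "ts_min > 0" using A1_ts by auto
  show "\<And>i. ts_min \<le> ts $ i" unfolding ts_min_def by (rule Min_le) auto
qed

lemma pi_max_pos: "pi_max > 0"
  using p_pos[of undefined] p_max[of undefined] ts_min unfolding pi_max_def by simp

lemma in_cellidx: "x \<in> Xs (cellidx Xs x)"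
proof -
  obtain i where i: "x \<in> Xs i" using Xs_cover by auto
  have "\<exists>!i. x \<in> Xs i" using i Xs_disj by blast
  then show ?thesis unfolding cellidx_def by (rule theI')
qed

lemma in_cell_iff: "x \<in> Xs j \<longleftrightarrow> j = cellidx Xs x"
  using in_cellidx Xs_disj by blast

lemma sum_indicator_cell: "(\<Sum>j\<in>UNIV. f j * indicator (Xs j) x) = (f (cellidx Xs x) :: real)"
  by (simp add: indicator_def in_cell_iff if_distrib cong: if_cong)

lemma Theta_pos: "\<theta> \<in> Theta \<Longrightarrow> 0 < \<theta> $ i" and Theta_less_1: "\<theta> \<in> Theta \<Longrightarrow> \<theta> $ i < 1"
  unfolding Theta_def by auto

lemma theta_star_eq_integral: "ts $ i = (\<integral>x. p x * indicator (Xs i) x \<partial>lam)"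
  unfolding theta_star_def set_lebesgue_integral_def by (simp add: mult.commute)

lemma normalizer_pos: "\<theta> \<in> Theta \<Longrightarrow> normalizer \<theta> > 0"
  unfolding normalizer_def using A1_ts Theta_pos by (intro sum_pos) (auto intro: divide_pos_pos)

lemma theta_star_le_normalizer:
  assumes "\<theta> \<in> Theta"
  shows "ts $ j \<le> \<theta> $ j * normalizer \<theta>"
proof -
  have "ts $ j / \<theta> $ j \<le> normalizer \<theta>" unfolding normalizer_def
    using A1_ts Theta_pos[OF assms] by (intro member_le_sum) (auto intro: less_imp_le)
  then show ?thesis using Theta_pos[OF assms, of j] by (simp add: field_simps)
qed

lemma pi_theta_eq:
  assumes "\<theta> \<in> Theta"
  shows "pit \<theta> x = p x / (normalizer \<theta> * \<theta> $ cellidx Xs x)"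
  using sum_indicator_cell[of "\<lambda>i. p x / \<theta> $ i" x]
  unfolding pi_theta_def normalizer_def[symmetric] by (simp add: field_simps)

lemma pi_theta_measurable[measurable]: "pit \<theta> \<in> borel_measurable lam"
  unfolding pi_theta_def by measurable

lemma pi_theta_pos: "\<theta> \<in> Theta \<Longrightarrow> pit \<theta> x > 0"
  using pi_theta_eq p_pos normalizer_pos Theta_pos by (metis divide_pos_pos mult_pos_pos)

lemma pi_theta_le_p:
  assumes "\<theta> \<in> Theta"
  shows "pit \<theta> x \<le> p x / ts_min"
proof -
  have "ts_min \<le> normalizer \<theta> * \<theta> $ cellidx Xs x"
    using theta_star_le_normalizer[OF assms] ts_min(2) by (metis mult.commute order_trans)
  then show ?thesis using pi_theta_eq[OF assms] p_nonneg[of x] ts_min(1) by (simp add: frac_le)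
qed

lemma pi_theta_le_pi_max: "\<theta> \<in> Theta \<Longrightarrow> pit \<theta> x \<le> pi_max"
  using pi_theta_le_p[of \<theta> x] p_max[of x] ts_min(1) unfolding pi_max_def
  by (meson divide_right_mono less_imp_le order_trans)

section \<open>The Metropolis--Hastings kernel\<close>

definition "accept_dens \<theta> x y = MH_accept lam p Xs \<theta> x y * q x y"

text \<open>The minorisation constant: \<open>pit \<theta> \<le> pi_max\<close> and \<open>q \<ge> q_min\<close> give
  \<open>accept_dens \<theta> x y \<ge> (q_min / pi_max) * pit \<theta> y\<close>; the cap \<open>1/2\<close> keeps \<open>1 - doeblin\<close> positive.\<close>
definition "doeblin = min (1/2) (q_min / pi_max)"

lemma doeblin: "0 < doeblin" "doeblin \<le> 1/2" "doeblin \<le> q_min / pi_max"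
  using q_min pi_max_pos unfolding doeblin_def by (auto simp: min_def)

lemma q_measurable[measurable]: "q x \<in> borel_measurable lam"
  using q_int by (rule borel_measurable_integrable)

lemma accept_dens_measurable[measurable]:
  "(\<lambda>(x, y). accept_dens \<theta> x y) \<in> borel_measurable (lam \<Otimes>\<^sub>M lam)"
  "accept_dens \<theta> x \<in> borel_measurable lam"
  unfolding accept_dens_def MH_accept_def by measurable

lemma accept_dens_nonneg: "\<theta> \<in> Theta \<Longrightarrow> 0 \<le> accept_dens \<theta> x y"
  unfolding accept_dens_def MH_accept_def using pi_theta_pos q_nonneg by (simp add: less_imp_le)

lemma accept_dens_le_q: "\<theta> \<in> Theta \<Longrightarrow> accept_dens \<theta> x y \<le> q x y"
  unfolding accept_dens_def MH_accept_def
  using mult_right_mono[of "min 1 (pit \<theta> y / pit \<theta> x)" 1 "q x y"] q_nonneg[of x y] by simp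

lemma accept_dens_minorised:
  assumes "\<theta> \<in> Theta"
  shows "doeblin * pit \<theta> y \<le> accept_dens \<theta> x y"
proof -
  let ?a = "min 1 (pit \<theta> y / pit \<theta> x)"
  have px: "0 < pit \<theta> x" "pit \<theta> x \<le> pi_max" and py: "0 < pit \<theta> y" "pit \<theta> y \<le> pi_max"
    using pi_theta_pos[OF assms] pi_theta_le_pi_max[OF assms] by auto
  have "doeblin * pit \<theta> y \<le> q_min * (pit \<theta> y / pi_max)"
    using mult_right_mono[OF doeblin(3), of "pit \<theta> y"] py by simp
  also have "\<dots> \<le> q_min * ?a"
    using px py pi_max_pos q_min(1) by (intro mult_left_mono) (auto simp: frac_le)
  also have "\<dots> \<le> ?a * q x y"
    using q_min px py by (simp add: mult.commute mult_left_mono)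
  finally show ?thesis unfolding accept_dens_def MH_accept_def .
qed

lemma detailed_balance:
  assumes "\<theta> \<in> Theta"
  shows "pit \<theta> x * accept_dens \<theta> x y = pit \<theta> y * accept_dens \<theta> y x"
proof -
  have "pit \<theta> u * min 1 (pit \<theta> v / pit \<theta> u) = min (pit \<theta> u) (pit \<theta> v)" for u v
    using pi_theta_pos[OF assms, of u] by (simp add: min_def field_simps)
  then show ?thesis
    unfolding accept_dens_def MH_accept_def using q_sym[of x y] by (metis min.commute mult.assoc)
qed

lemma accept_dens_integrable: "\<theta> \<in> Theta \<Longrightarrow> integrable lam (accept_dens \<theta> x)"
  by (rule Bochner_Integration.integrable_bound[OF q_int[of x]])
    (use accept_dens_nonneg accept_dens_le_q q_nonneg in auto)

lemma accept_mass_le_1: "\<theta> \<in> Theta \<Longrightarrow> (\<integral>y. accept_dens \<theta> x y \<partial>lam) \<le> 1"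
  using integral_mono[OF accept_dens_integrable q_int, of \<theta> x] accept_dens_le_q q_dens by auto

lemma accept_mass_nonneg: "\<theta> \<in> Theta \<Longrightarrow> 0 \<le> (\<integral>y. accept_dens \<theta> x y \<partial>lam)"
  using accept_dens_nonneg by (simp add: integral_nonneg_AE)

lemma MH_op_eq:
  "P \<theta> f x = (\<integral>y. f y * accept_dens \<theta> x y \<partial>lam) + (1 - (\<integral>y. accept_dens \<theta> x y \<partial>lam)) * f x"
  unfolding MH_op_def accept_dens_def by (simp add: mult.assoc)

lemma bounded_measI: "f \<in> borel_measurable lam \<Longrightarrow> (\<And>x. \<bar>f x\<bar> \<le> B) \<Longrightarrow> bounded_meas f"
  unfolding bounded_meas_def by blast

lemma bounded_meas_const: "bounded_meas (\<lambda>x. c)"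
  by (rule bounded_measI[of _ "\<bar>c\<bar>"]) auto

lemma bounded_meas_add:
  assumes "bounded_meas f" "bounded_meas g"
  shows "bounded_meas (\<lambda>x. f x + g x)"
proof -
  obtain B1 B2 where [measurable]: "f \<in> borel_measurable lam" "g \<in> borel_measurable lam"
    and "\<And>x. \<bar>f x\<bar> \<le> B1" "\<And>x. \<bar>g x\<bar> \<le> B2"
    using assms unfolding bounded_meas_def by blast
  then have "\<bar>f x + g x\<bar> \<le> B1 + B2" for x by (meson abs_triangle_ineq add_mono order_trans)
  then show ?thesis by (intro bounded_measI) auto
qed

lemma bounded_meas_uminus: "bounded_meas f \<Longrightarrow> bounded_meas (\<lambda>x. - f x)"
  unfolding bounded_meas_def by auto

lemma bounded_meas_diff: "bounded_meas f \<Longrightarrow> bounded_meas g \<Longrightarrow> bounded_meas (\<lambda>x. f x - g x)"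
  using bounded_meas_add[OF _ bounded_meas_uminus] by simp

lemma bounded_meas_sum: "(\<And>n. bounded_meas (G n)) \<Longrightarrow> bounded_meas (\<lambda>x. \<Sum>n<(N::nat). G n x)"
  by (induction N) (auto intro: bounded_meas_add bounded_meas_const)

lemma bounded_meas_abs: "bounded_meas f \<Longrightarrow> bounded_meas (\<lambda>x. \<bar>f x\<bar>)"
  unfolding bounded_meas_def by auto

lemma bounded_meas_indicator_mult:
  assumes "bounded_meas f"
  shows "bounded_meas (\<lambda>x. indicator (Xs i) x * f x)"
proof -
  obtain B where [measurable]: "f \<in> borel_measurable lam" and B: "\<And>x. \<bar>f x\<bar> \<le> B"
    using assms unfolding bounded_meas_def by blast
  have "\<bar>indicator (Xs i) x * f x\<bar> \<le> B" for x
    using B[of x] abs_ge_zero[of "f x"] by (auto simp: indicator_def)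
  then show ?thesis by (intro bounded_measI) auto
qed

lemma integrable_mult_accept_dens:
  "\<theta> \<in> Theta \<Longrightarrow> bounded_meas f \<Longrightarrow> integrable lam (\<lambda>y. f y * accept_dens \<theta> x y)"
  unfolding bounded_meas_def using integrable_bounded_mult[OF accept_dens_integrable] by blast

lemma abs_integral_accept_le:
  assumes "\<theta> \<in> Theta" "bounded_meas f" "\<And>x. \<bar>f x\<bar> \<le> B"
  shows "\<bar>\<integral>y. f y * accept_dens \<theta> x y \<partial>lam\<bar> \<le> B * (\<integral>y. accept_dens \<theta> x y \<partial>lam)"
  using assms abs_integral_bounded_mult_le[OF accept_dens_integrable accept_dens_nonneg]
  unfolding bounded_meas_def by blast

lemma integral_accept_measurable:
  assumes [measurable]: "f \<in> borel_measurable lam"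
  shows "(\<lambda>x. \<integral>y. f y * accept_dens \<theta> x y \<partial>lam) \<in> borel_measurable lam"
  by (rule borel_measurable_lebesgue_integral) measurable

lemma bounded_meas_integral_accept:
  assumes "\<theta> \<in> Theta" "bounded_meas f"
  shows "bounded_meas (\<lambda>x. \<integral>y. f y * accept_dens \<theta> x y \<partial>lam)"
proof -
  obtain B where f: "f \<in> borel_measurable lam" and B: "\<And>x. \<bar>f x\<bar> \<le> B"
    using assms(2) unfolding bounded_meas_def by blast
  have "B * (\<integral>y. accept_dens \<theta> x y \<partial>lam) \<le> B" for x
    using accept_mass_le_1[OF assms(1)] B[of x] by (simp add: mult_left_le)
  then show ?thesis
    using integral_accept_measurable[OF f] abs_integral_accept_le[OF assms B]
    by (intro bounded_measI[of _ B]) (auto intro: order_trans)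
qed

lemma bounded_meas_accept_mass_mult:
  assumes "\<theta> \<in> Theta" "bounded_meas f"
  shows "bounded_meas (\<lambda>x. (\<integral>y. accept_dens \<theta> x y \<partial>lam) * f x)"
proof -
  obtain B where [measurable]: "f \<in> borel_measurable lam" and B: "\<And>x. \<bar>f x\<bar> \<le> B"
    using assms(2) unfolding bounded_meas_def by blast
  have "\<bar>(\<integral>y. accept_dens \<theta> x y \<partial>lam) * f x\<bar> \<le> 1 * B" for x
    unfolding abs_mult using accept_mass_le_1[OF assms(1)] accept_mass_nonneg[OF assms(1)] B[of x]
    by (intro mult_mono) auto
  then show ?thesis by (intro bounded_measI) auto
qed

lemma abs_MH_op_le:
  assumes "\<theta> \<in> Theta" "bounded_meas f" "\<And>x. \<bar>f x\<bar> \<le> B"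
  shows "\<bar>P \<theta> f x\<bar> \<le> B"
proof -
  let ?K = "\<integral>y. accept_dens \<theta> x y \<partial>lam"
  have "\<bar>(1 - ?K) * f x\<bar> \<le> (1 - ?K) * B"
    using accept_mass_le_1[OF assms(1)] assms(3)[of x] by (simp add: abs_mult mult_left_mono)
  then show ?thesis
    unfolding MH_op_eq using abs_integral_accept_le[OF assms, of x] by (simp add: algebra_simps)
qed

lemma MH_op_measurable:
  assumes [measurable]: "f \<in> borel_measurable lam"
  shows "P \<theta> f \<in> borel_measurable lam"
  using integral_accept_measurable[OF assms] unfolding MH_op_eq[abs_def] by measurable

lemma bounded_meas_MH_op: "\<theta> \<in> Theta \<Longrightarrow> bounded_meas f \<Longrightarrow> bounded_meas (P \<theta> f)"
  using abs_MH_op_le MH_op_measurable unfolding bounded_meas_def by blast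

lemma bounded_meas_MH_op_iter: "\<theta> \<in> Theta \<Longrightarrow> bounded_meas f \<Longrightarrow> bounded_meas ((P \<theta> ^^ n) f)"
  by (induction n) (auto intro: bounded_meas_MH_op)

lemma MH_op_add:
  assumes "\<theta> \<in> Theta" "bounded_meas f" "bounded_meas g"
  shows "P \<theta> (\<lambda>x. f x + g x) x = P \<theta> f x + P \<theta> g x"
  using Bochner_Integration.integral_add[OF integrable_mult_accept_dens[OF assms(1,2)]
      integrable_mult_accept_dens[OF assms(1,3)]]
  unfolding MH_op_eq by (simp add: distrib_left distrib_right)

lemma MH_op_diff:
  assumes "\<theta> \<in> Theta" "bounded_meas f" "bounded_meas g"
  shows "P \<theta> (\<lambda>x. f x - g x) x = P \<theta> f x - P \<theta> g x"
  using Bochner_Integration.integral_diff[OF integrable_mult_accept_dens[OF assms(1,2)]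
      integrable_mult_accept_dens[OF assms(1,3)]]
  unfolding MH_op_eq by (simp add: left_diff_distrib right_diff_distrib)

lemma MH_op_const: "P \<theta> (\<lambda>x. c) x = c"
  unfolding MH_op_eq by (simp add: left_diff_distrib)

lemma MH_op_sum:
  assumes "\<theta> \<in> Theta" "\<And>n. bounded_meas (G n)"
  shows "P \<theta> (\<lambda>x. \<Sum>n<(N::nat). G n x) x = (\<Sum>n<N. P \<theta> (G n) x)"
proof (induction N)
  case 0 then show ?case using MH_op_const[of \<theta> 0 x] by simp
next
  case (Suc N)
  then show ?case
    using MH_op_add[OF assms(1) bounded_meas_sum[OF assms(2)] assms(2)[of N]] by simp
qed

lemma MH_op_iter_diff_const:
  assumes "\<theta> \<in> Theta" "bounded_meas g"
  shows "(P \<theta> ^^ n) (\<lambda>x. g x - c) = (\<lambda>x. (P \<theta> ^^ n) g x - c)"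
proof (induction n)
  case (Suc n)
  have "(P \<theta> ^^ Suc n) (\<lambda>x. g x - c) = P \<theta> (\<lambda>x. (P \<theta> ^^ n) g x - c)" using Suc by simp
  also have "\<dots> = (\<lambda>x. P \<theta> ((P \<theta> ^^ n) g) x - c)"
    using MH_op_diff[OF assms(1) bounded_meas_MH_op_iter[OF assms] bounded_meas_const] MH_op_const
    by auto
  finally show ?case by simp
qed simp

lemma integrable_pi_theta: "\<theta> \<in> Theta \<Longrightarrow> integrable lam (pit \<theta>)"
  by (rule Bochner_Integration.integrable_bound[of _ "\<lambda>x. p x / ts_min"])
    (use p_int pi_theta_pos pi_theta_le_p p_nonneg ts_min(1) in \<open>auto simp: less_imp_le\<close>)

lemma integrable_pi_mult: "\<theta> \<in> Theta \<Longrightarrow> bounded_meas f \<Longrightarrow> integrable lam (\<lambda>x. pit \<theta> x * f x)"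
  using integrable_bounded_mult[OF integrable_pi_theta] unfolding bounded_meas_def
  by (metis (no_types, lifting) mult.commute Bochner_Integration.integrable_cong)

lemma integrable_p_mult: "bounded_meas f \<Longrightarrow> integrable lam (\<lambda>x. p x * f x)"
  using integrable_bounded_mult[OF p_int] unfolding bounded_meas_def
  by (metis (no_types, lifting) mult.commute Bochner_Integration.integrable_cong)

lemma pi_int_eq_cells:
  assumes "\<theta> \<in> Theta" "bounded_meas f"
  shows "pi_int \<theta> f = (\<Sum>i\<in>UNIV. (\<integral>x. p x * (indicator (Xs i) x * f x) \<partial>lam) / \<theta> $ i) / normalizer \<theta>"
proof -
  have "pit \<theta> x * f x = (\<Sum>i\<in>UNIV. p x * (indicator (Xs i) x * f x) / \<theta> $ i) / normalizer \<theta>" for x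
  proof -
    have "(\<Sum>i\<in>UNIV. p x / \<theta> $ i * indicator (Xs i) x) * f x
        = (\<Sum>i\<in>UNIV. p x * (indicator (Xs i) x * f x) / \<theta> $ i)"
      unfolding sum_distrib_right by (simp add: mult_ac)
    then show ?thesis
      unfolding pi_theta_def normalizer_def[symmetric] by (simp add: divide_inverse mult_ac)
  qed
  then have "pi_int \<theta> f = (\<integral>x. (\<Sum>i\<in>UNIV. p x * (indicator (Xs i) x * f x) / \<theta> $ i) \<partial>lam) / normalizer \<theta>"
    unfolding pi_int_def by simp
  also have "(\<integral>x. (\<Sum>i\<in>UNIV. p x * (indicator (Xs i) x * f x) / \<theta> $ i) \<partial>lam)
      = (\<Sum>i\<in>UNIV. (\<integral>x. p x * (indicator (Xs i) x * f x) \<partial>lam) / \<theta> $ i)"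
    using assms(2)
    by (subst Bochner_Integration.integral_sum)
      (auto intro!: integrable_divide_zero integrable_p_mult bounded_meas_indicator_mult)
  finally show ?thesis .
qed

lemma pi_int_const: "\<theta> \<in> Theta \<Longrightarrow> pi_int \<theta> (\<lambda>x. c) = c"
  using pi_int_eq_cells[OF _ bounded_meas_const, of \<theta> 1] normalizer_pos[of \<theta>]
  unfolding pi_int_def normalizer_def theta_star_eq_integral by simp

lemma integral_pi_theta: "\<theta> \<in> Theta \<Longrightarrow> (\<integral>x. pit \<theta> x \<partial>lam) = 1"
  using pi_int_const[of \<theta> 1] unfolding pi_int_def by simp

lemma pi_int_add:
  assumes "\<theta> \<in> Theta" "bounded_meas f" "bounded_meas g"
  shows "pi_int \<theta> (\<lambda>x. f x + g x) = pi_int \<theta> f + pi_int \<theta> g"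
  unfolding pi_int_def distrib_left
  by (rule Bochner_Integration.integral_add[OF integrable_pi_mult[OF assms(1,2)] integrable_pi_mult[OF assms(1,3)]])

lemma pi_int_diff:
  assumes "\<theta> \<in> Theta" "bounded_meas f" "bounded_meas g"
  shows "pi_int \<theta> (\<lambda>x. f x - g x) = pi_int \<theta> f - pi_int \<theta> g"
  unfolding pi_int_def right_diff_distrib
  by (rule Bochner_Integration.integral_diff[OF integrable_pi_mult[OF assms(1,2)] integrable_pi_mult[OF assms(1,3)]])

lemma abs_pi_int_le:
  assumes "\<theta> \<in> Theta" "bounded_meas f" "\<And>x. \<bar>f x\<bar> \<le> B"
  shows "\<bar>pi_int \<theta> f\<bar> \<le> B"
  using abs_integral_bounded_mult_le[OF integrable_pi_theta pi_theta_pos[THEN less_imp_le], of \<theta> f B]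
    assms integral_pi_theta unfolding pi_int_def bounded_meas_def by (simp add: mult.commute)

text \<open>Both sides are iterated integrals of \<open>pit \<theta> x * accept_dens \<theta> x y * f y\<close>, in opposite
  orders once detailed balance swaps \<open>x\<close> and \<open>y\<close>.\<close>
lemma pi_int_integral_accept:
  assumes th: "\<theta> \<in> Theta" and f: "bounded_meas f"
  shows "pi_int \<theta> (\<lambda>x. \<integral>y. f y * accept_dens \<theta> x y \<partial>lam)
       = pi_int \<theta> (\<lambda>x. (\<integral>y. accept_dens \<theta> x y \<partial>lam) * f x)"
proof -
  have [measurable]: "f \<in> borel_measurable lam" using f unfolding bounded_meas_def by blast
  define F where "F x y = pit \<theta> x * (f y * accept_dens \<theta> x y)" for x y
  have F_measurable[measurable]: "(\<lambda>(x, y). F x y) \<in> borel_measurable (lam \<Otimes>\<^sub>M lam)"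
    unfolding F_def by measurable
  have "(\<integral>y. norm (F x y) \<partial>lam) = pit \<theta> x * (\<integral>y. \<bar>f y\<bar> * accept_dens \<theta> x y \<partial>lam)" for x
  proof -
    have "(\<integral>y. norm (F x y) \<partial>lam) = (\<integral>y. pit \<theta> x * (\<bar>f y\<bar> * accept_dens \<theta> x y) \<partial>lam)"
      unfolding F_def using pi_theta_pos[OF th, of x] accept_dens_nonneg[OF th]
      by (intro Bochner_Integration.integral_cong) (auto simp: abs_mult)
    then show ?thesis by simp
  qed
  then have "integrable lam (\<lambda>x. \<integral>y. norm (F x y) \<partial>lam)"
    using integrable_pi_mult[OF th bounded_meas_integral_accept[OF th bounded_meas_abs[OF f]]] by simp
  moreover have "AE x in lam. integrable lam (\<lambda>y. F x y)"
    unfolding F_def using integrable_mult_accept_dens[OF th f] by simp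
  ultimately have "integrable (lam \<Otimes>\<^sub>M lam) (\<lambda>(x, y). F x y)"
    using PS.Fubini_integrable[OF F_measurable] by simp
  then have "(\<integral>y. (\<integral>x. F x y \<partial>lam) \<partial>lam) = (\<integral>x. (\<integral>y. F x y \<partial>lam) \<partial>lam)"
    by (rule PS.Fubini_integral)
  moreover have "(\<integral>x. F x y \<partial>lam) = pit \<theta> y * ((\<integral>x. accept_dens \<theta> y x \<partial>lam) * f y)" for y
  proof -
    have "(\<integral>x. F x y \<partial>lam) = (\<integral>x. (f y * pit \<theta> y) * accept_dens \<theta> y x \<partial>lam)"
      unfolding F_def by (rule Bochner_Integration.integral_cong) (auto simp: detailed_balance[OF th] mult_ac)
    then show ?thesis by (simp add: mult_ac)
  qed
  moreover have "(\<integral>y. F x y \<partial>lam) = pit \<theta> x * (\<integral>y. f y * accept_dens \<theta> x y \<partial>lam)" for x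
    unfolding F_def by simp
  ultimately show ?thesis unfolding pi_int_def by simp
qed

lemma pi_int_MH_op:
  assumes th: "\<theta> \<in> Theta" and f: "bounded_meas f"
  shows "pi_int \<theta> (P \<theta> f) = pi_int \<theta> f"
proof -
  have "P \<theta> f = (\<lambda>x. (\<integral>y. f y * accept_dens \<theta> x y \<partial>lam)
                        + (f x - (\<integral>y. accept_dens \<theta> x y \<partial>lam) * f x))"
    unfolding MH_op_eq[abs_def] by (simp add: left_diff_distrib)
  then show ?thesis
    using pi_int_add[OF th bounded_meas_integral_accept[OF th f]
        bounded_meas_diff[OF f bounded_meas_accept_mass_mult[OF th f]]]
      pi_int_diff[OF th f bounded_meas_accept_mass_mult[OF th f]]
      pi_int_integral_accept[OF th f]
    by simp
qed

lemma pi_int_MH_op_iter: "\<theta> \<in> Theta \<Longrightarrow> bounded_meas g \<Longrightarrow> pi_int \<theta> ((P \<theta> ^^ n) g) = pi_int \<theta> g"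
  by (induction n) (simp_all add: pi_int_MH_op bounded_meas_MH_op_iter)

section \<open>Geometric ergodicity and the Poisson equation\<close>

lemma doeblin_rate: "0 \<le> 1 - doeblin" "1 - doeblin < 1"
  using doeblin by auto

text \<open>On \<open>\<pi>\<^sub>\<theta>\<close>-centred functions, subtracting the minorising measure \<open>doeblin * \<pi>\<^sub>\<theta>\<close> from the
  kernel does not change \<open>P \<theta> f\<close>, and what remains has total mass \<open>1 - doeblin\<close>.\<close>
lemma MH_op_contraction:
  assumes th: "\<theta> \<in> Theta" and f: "bounded_meas f" and B: "\<And>x. \<bar>f x\<bar> \<le> B"
    and centred: "pi_int \<theta> f = 0"
  shows "\<bar>P \<theta> f x\<bar> \<le> (1 - doeblin) * B"
proof -
  let ?K = "\<integral>y. accept_dens \<theta> x y \<partial>lam"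
  let ?r = "\<lambda>y. accept_dens \<theta> x y - doeblin * pit \<theta> y"
  have [measurable]: "f \<in> borel_measurable lam" using f unfolding bounded_meas_def by blast
  have int_r: "integrable lam ?r"
    using accept_dens_integrable[OF th] integrable_pi_theta[OF th] by simp
  have "(\<integral>y. f y * accept_dens \<theta> x y \<partial>lam) = (\<integral>y. f y * accept_dens \<theta> x y - doeblin * (pit \<theta> y * f y) \<partial>lam)"
    using integrable_mult_accept_dens[OF th f] integrable_pi_mult[OF th f] centred
    unfolding pi_int_def by simp
  also have "\<dots> = (\<integral>y. f y * ?r y \<partial>lam)"
    by (simp add: algebra_simps)
  finally have "\<bar>\<integral>y. f y * accept_dens \<theta> x y \<partial>lam\<bar> \<le> B * (\<integral>y. ?r y \<partial>lam)"
    using abs_integral_bounded_mult_le[OF int_r _ _ B] accept_dens_minorised[OF th] by simp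
  also have "(\<integral>y. ?r y \<partial>lam) = ?K - doeblin"
    using accept_dens_integrable[OF th] integrable_pi_theta[OF th] integral_pi_theta[OF th] by simp
  finally have "\<bar>\<integral>y. f y * accept_dens \<theta> x y \<partial>lam\<bar> \<le> B * (?K - doeblin)" .
  moreover have "\<bar>(1 - ?K) * f x\<bar> \<le> (1 - ?K) * B"
    using accept_mass_le_1[OF th] B[of x] by (simp add: abs_mult mult_left_mono)
  ultimately show ?thesis unfolding MH_op_eq by (simp add: algebra_simps)
qed

lemma abs_MH_op_iter_le:
  assumes th: "\<theta> \<in> Theta" and g: "bounded_meas g" and B: "\<And>x. \<bar>g x\<bar> \<le> B"
    and centred: "pi_int \<theta> g = 0"
  shows "\<bar>(P \<theta> ^^ n) g x\<bar> \<le> (1 - doeblin) ^ n * B"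
proof (induction n arbitrary: x)
  case (Suc n x)
  have "\<bar>P \<theta> ((P \<theta> ^^ n) g) x\<bar> \<le> (1 - doeblin) * ((1 - doeblin) ^ n * B)"
    using MH_op_contraction[OF th bounded_meas_MH_op_iter[OF th g] Suc] pi_int_MH_op_iter[OF th g]
      centred by simp
  then show ?case by (simp add: mult.assoc)
qed (simp add: B)

definition "poisson_sol \<theta> g x = (\<Sum>n. (P \<theta> ^^ n) g x)"

context
  fixes \<theta> :: "real^'d" and g :: "'a \<Rightarrow> real" and B :: real
  assumes th: "\<theta> \<in> Theta" and g: "bounded_meas g" and B: "\<And>x. \<bar>g x\<bar> \<le> B"
    and centred: "pi_int \<theta> g = 0"
begin

lemma summable_MH_op_iter: "summable (\<lambda>n. (P \<theta> ^^ n) g x)"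
  using summable_geometric_tail[OF doeblin_rate, where N = 0 and B = B]
  by (rule summable_comparison_test') (use abs_MH_op_iter_le[OF th g B centred] in simp)

lemma poisson_sol_minus_partial_sum:
  "\<bar>poisson_sol \<theta> g x - (\<Sum>n<N. (P \<theta> ^^ n) g x)\<bar> \<le> (1 - doeblin) ^ N * B / doeblin"
proof -
  have "poisson_sol \<theta> g x - (\<Sum>n<N. (P \<theta> ^^ n) g x) = (\<Sum>n. (P \<theta> ^^ (n + N)) g x)"
    unfolding poisson_sol_def using suminf_split_initial_segment[OF summable_MH_op_iter[of x], where k = N] by simp
  also have "\<bar>\<dots>\<bar> \<le> (\<Sum>n. (1 - doeblin) ^ (n + N) * B)"
    using norm_suminf_le[of "\<lambda>n. (P \<theta> ^^ (n + N)) g x" "\<lambda>n. (1 - doeblin) ^ (n + N) * B"]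
      abs_MH_op_iter_le[OF th g B centred] summable_geometric_tail[OF doeblin_rate] by simp
  finally show ?thesis unfolding suminf_geometric_tail[OF doeblin_rate] by simp
qed

lemma abs_poisson_sol_le: "\<bar>poisson_sol \<theta> g x\<bar> \<le> B / doeblin"
  using poisson_sol_minus_partial_sum[of x 0] by simp

lemma bounded_meas_poisson_sol: "bounded_meas (poisson_sol \<theta> g)"
proof (rule bounded_measI[OF _ abs_poisson_sol_le])
  show "poisson_sol \<theta> g \<in> borel_measurable lam"
    unfolding poisson_sol_def[abs_def] using bounded_meas_MH_op_iter[OF th g]
    unfolding bounded_meas_def by (intro borel_measurable_suminf) auto
qed

lemma bounded_meas_partial_sum: "bounded_meas (\<lambda>x. \<Sum>n<N. (P \<theta> ^^ n) g x)"
  by (rule bounded_meas_sum) (rule bounded_meas_MH_op_iter[OF th g])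

lemma poisson_sol_eq: "poisson_sol \<theta> g x - P \<theta> (poisson_sol \<theta> g) x = g x"
proof -
  let ?u = "poisson_sol \<theta> g" and ?S = "\<lambda>N x. \<Sum>n<N. (P \<theta> ^^ n) g x"
  have partial_sums: "(\<lambda>N. ?S N x) \<longlonglongrightarrow> ?u x"
    using summable_MH_op_iter unfolding poisson_sol_def by (simp add: summable_LIMSEQ)
  have shift: "(\<lambda>N. ?S (Suc N) x - g x) = (\<lambda>N. P \<theta> (?S N) x)"
  proof
    fix N
    show "?S (Suc N) x - g x = P \<theta> (?S N) x"
      using MH_op_sum[OF th bounded_meas_MH_op_iter[OF th g], where N = N and x = x]
      by (simp add: sum.lessThan_Suc_shift del: sum.lessThan_Suc)
  qed
  have "(\<lambda>N. P \<theta> (?S N) x) \<longlonglongrightarrow> P \<theta> ?u x"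
  proof (rule Lim_null[THEN iffD2], rule Lim_null_comparison)
    have "\<bar>P \<theta> (?S N) x - P \<theta> ?u x\<bar> = \<bar>P \<theta> (\<lambda>y. ?u y - ?S N y) x\<bar>" for N
      using MH_op_diff[OF th bounded_meas_poisson_sol bounded_meas_partial_sum] by simp
    also have "\<dots> N \<le> (1 - doeblin) ^ N * B / doeblin" for N
      by (rule abs_MH_op_le[OF th bounded_meas_diff[OF bounded_meas_poisson_sol bounded_meas_partial_sum]
            poisson_sol_minus_partial_sum])
    finally show "\<forall>\<^sub>F N in sequentially. norm (P \<theta> (?S N) x - P \<theta> ?u x) \<le> (1 - doeblin) ^ N * B / doeblin"
      by simp
    show "(\<lambda>N. (1 - doeblin) ^ N * B / doeblin) \<longlonglongrightarrow> 0"
      using doeblin_rate by (intro tendsto_divide_zero tendsto_mult_left_zero LIMSEQ_power_zero) simp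
  qed
  then have "(\<lambda>N. ?S (Suc N) x - g x) \<longlonglongrightarrow> P \<theta> ?u x" unfolding shift .
  moreover have "(\<lambda>N. ?S (Suc N) x - g x) \<longlonglongrightarrow> ?u x - g x"
    by (rule tendsto_diff[OF LIMSEQ_Suc[OF partial_sums] tendsto_const])
  ultimately have "P \<theta> ?u x = ?u x - g x" by (rule LIMSEQ_unique)
  then show ?thesis by simp
qed

lemma pi_int_poisson_sol: "pi_int \<theta> (poisson_sol \<theta> g) = 0"
proof -
  let ?S = "\<lambda>N x. \<Sum>n<N. (P \<theta> ^^ n) g x"
  have "pi_int \<theta> (?S N) = 0" for N
  proof (induction N)
    case (Suc N)
    then show ?case
      using pi_int_add[OF th bounded_meas_partial_sum bounded_meas_MH_op_iter[OF th g, of N]]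
        pi_int_MH_op_iter[OF th g] centred by simp
  qed (use pi_int_const[OF th, of 0] in simp)
  then have "\<bar>pi_int \<theta> (poisson_sol \<theta> g)\<bar> \<le> 0 + (1 - doeblin) ^ N * (B / doeblin)" for N
    using pi_int_diff[OF th bounded_meas_poisson_sol bounded_meas_partial_sum]
      abs_pi_int_le[OF th bounded_meas_diff[OF bounded_meas_poisson_sol bounded_meas_partial_sum]
        poisson_sol_minus_partial_sum]
    by simp
  from le_of_le_plus_geometric[OF this doeblin_rate] show ?thesis by simp
qed

end

text \<open>A bounded solution of \<open>v - P \<theta> v = w\<close> is determined up to its \<open>\<pi>\<^sub>\<theta>\<close>-mean, with the same
  constant as the Poisson solution: iterate \<open>v - c = w + P \<theta> (v - c)\<close> and use the contraction.\<close>
lemma abs_centred_le_of_poisson_eq: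
  assumes th: "\<theta> \<in> Theta" and v: "bounded_meas v" and w: "\<And>x. \<bar>w x\<bar> \<le> Bw"
    and eq: "\<And>x. v x - P \<theta> v x = w x"
  shows "\<bar>v x - pi_int \<theta> v\<bar> \<le> Bw / doeblin"
proof -
  define c where "c = pi_int \<theta> v"
  define z where "z x = v x - c" for x
  obtain Bv where Bv: "\<And>x. \<bar>v x\<bar> \<le> Bv" using v unfolding bounded_meas_def by blast
  have z: "bounded_meas z" unfolding z_def by (rule bounded_meas_diff[OF v bounded_meas_const])
  have centred: "pi_int \<theta> z = 0"
    unfolding z_def c_def using pi_int_diff[OF th v bounded_meas_const] pi_int_const[OF th] by simp
  have z_eq: "z x = w x + P \<theta> z x" for x
    unfolding z_def using MH_op_diff[OF th v bounded_meas_const[of c], of x] MH_op_const eq[of x] by simp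
  have "0 \<le> Bw" using w[of x] by linarith
  then have "0 \<le> Bw / doeblin" using doeblin(1) by simp
  have "\<bar>z x\<bar> \<le> Bw / doeblin + (1 - doeblin) ^ N * (Bv + \<bar>c\<bar>)" for N x
  proof (induction N arbitrary: x)
    case 0
    show ?case unfolding z_def using Bv[of x] \<open>0 \<le> Bw / doeblin\<close> by simp
  next
    case (Suc N x)
    have "\<bar>P \<theta> z x\<bar> \<le> (1 - doeblin) * (Bw / doeblin + (1 - doeblin) ^ N * (Bv + \<bar>c\<bar>))"
      by (rule MH_op_contraction[OF th z Suc centred])
    then have "\<bar>z x\<bar> \<le> Bw + (1 - doeblin) * (Bw / doeblin + (1 - doeblin) ^ N * (Bv + \<bar>c\<bar>))"
      using z_eq[of x] w[of x] by linarith
    also have "\<dots> = Bw / doeblin + (1 - doeblin) ^ Suc N * (Bv + \<bar>c\<bar>)"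
      using doeblin(1) by (simp add: field_simps)
    finally show ?case .
  qed
  from le_of_le_plus_geometric[OF this doeblin_rate] show ?thesis by (simp add: z_def c_def)
qed

lemma Hfun_component: "Hfun Xs x \<theta> $ i = \<theta> $ i * (indicator (Xs i) x - \<theta> $ cellidx Xs x)"
  unfolding Hfun_def by simp

lemma component_cellidx: "(\<theta>::real^'d) $ cellidx Xs x = (\<Sum>j\<in>UNIV. \<theta> $ j * indicator (Xs j) x)"
  using sum_indicator_cell[of "\<lambda>j. \<theta> $ j" x] by simp

lemma Hfun_component_measurable[measurable]: "(\<lambda>x. Hfun Xs x \<theta> $ i) \<in> borel_measurable lam"
  unfolding Hfun_component component_cellidx by measurable

lemma abs_Hfun_component_le:
  assumes "\<theta> \<in> Theta"
  shows "\<bar>Hfun Xs x \<theta> $ i\<bar> \<le> 1"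
proof -
  have "\<bar>indicator (Xs i) x - \<theta> $ cellidx Xs x\<bar> \<le> 1"
    using Theta_pos[OF assms, of "cellidx Xs x"] Theta_less_1[OF assms, of "cellidx Xs x"]
    by (auto simp: indicator_def)
  then have "\<bar>\<theta> $ i\<bar> * \<bar>indicator (Xs i) x - \<theta> $ cellidx Xs x\<bar> \<le> 1 * 1"
    using Theta_pos[OF assms, of i] Theta_less_1[OF assms, of i] by (intro mult_mono) auto
  then show ?thesis unfolding Hfun_component abs_mult by simp
qed

lemma bounded_meas_Hfun_component: "\<theta> \<in> Theta \<Longrightarrow> bounded_meas (\<lambda>x. Hfun Xs x \<theta> $ i)"
  by (rule bounded_measI[OF _ abs_Hfun_component_le]) auto

lemma hmean_component:
  assumes th: "\<theta> \<in> Theta"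
  shows "hmean lam p Xs \<theta> $ i = pi_int \<theta> (\<lambda>x. Hfun Xs x \<theta> $ i)"
proof -
  have expand: "pit \<theta> x *\<^sub>R Hfun Xs x \<theta> = (\<Sum>j\<in>UNIV. (pit \<theta> x * Hfun Xs x \<theta> $ j) *\<^sub>R axis j 1)" for x
  proof -
    have "pit \<theta> x *\<^sub>R Hfun Xs x \<theta> = pit \<theta> x *\<^sub>R (\<Sum>j\<in>UNIV. (Hfun Xs x \<theta> $ j) *\<^sub>R axis j 1)"
      using basis_expansion[of "Hfun Xs x \<theta>"] by (simp add: scalar_mult_eq_scaleR)
    then show ?thesis by (simp add: scaleR_sum_right)
  qed
  have "hmean lam p Xs \<theta> = (\<Sum>j\<in>UNIV. (\<integral>x. (pit \<theta> x * Hfun Xs x \<theta> $ j) *\<^sub>R (axis j 1 :: real^'d) \<partial>lam))"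
    unfolding hmean_def expand
    by (intro Bochner_Integration.integral_sum integrable_scaleR_left
        integrable_pi_mult[OF th bounded_meas_Hfun_component[OF th]])
  also have "\<dots> = (\<Sum>j\<in>UNIV. pi_int \<theta> (\<lambda>x. Hfun Xs x \<theta> $ j) *\<^sub>R (axis j 1 :: real^'d))"
    unfolding pi_int_def
    by (intro sum.cong refl integral_scaleR_left integrable_pi_mult[OF th bounded_meas_Hfun_component[OF th]])
  finally show ?thesis by (simp add: axis_def if_distrib cong: if_cong)
qed

definition "H_centred \<theta> i x = Hfun Xs x \<theta> $ i - hmean lam p Xs \<theta> $ i"

lemma bounded_meas_H_centred: "\<theta> \<in> Theta \<Longrightarrow> bounded_meas (H_centred \<theta> i)"
  unfolding H_centred_def[abs_def] by (rule bounded_meas_diff[OF bounded_meas_Hfun_component bounded_meas_const])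

lemma abs_H_centred_le:
  assumes "\<theta> \<in> Theta"
  shows "\<bar>H_centred \<theta> i x\<bar> \<le> 2"
proof -
  have "\<bar>hmean lam p Xs \<theta> $ i\<bar> \<le> 1"
    unfolding hmean_component[OF assms]
    by (rule abs_pi_int_le[OF assms bounded_meas_Hfun_component[OF assms] abs_Hfun_component_le[OF assms]])
  then show ?thesis using abs_Hfun_component_le[OF assms, of x i] unfolding H_centred_def by linarith
qed

lemma pi_int_H_centred: "\<theta> \<in> Theta \<Longrightarrow> pi_int \<theta> (H_centred \<theta> i) = 0"
  unfolding H_centred_def[abs_def]
  by (simp add: pi_int_diff[OF _ bounded_meas_Hfun_component bounded_meas_const] pi_int_const hmean_component)

lemmas H_centred_poisson = bounded_meas_H_centred abs_H_centred_le pi_int_H_centred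

lemma MH_vec_iter_component: "(MH_vec lam p Xs q \<theta> ^^ n) F x $ i = (P \<theta> ^^ n) (\<lambda>y. F y $ i) x"
proof (induction n arbitrary: x)
  case (Suc n x)
  have "(MH_vec lam p Xs q \<theta> ^^ Suc n) F x $ i = P \<theta> (\<lambda>y. (MH_vec lam p Xs q \<theta> ^^ n) F y $ i) x"
    by (simp add: MH_vec_def)
  also have "(\<lambda>y. (MH_vec lam p Xs q \<theta> ^^ n) F y $ i) = (P \<theta> ^^ n) (\<lambda>y. F y $ i)"
    using Suc by (intro ext) simp
  finally show ?case by simp
qed simp

lemma Hterm_component:
  "\<theta> \<in> Theta \<Longrightarrow> Hterm lam p Xs q \<theta> n x $ i = (P \<theta> ^^ n) (H_centred \<theta> i) x"
  unfolding Hterm_def H_centred_def[abs_def] MH_op_iter_diff_const[OF _ bounded_meas_Hfun_component]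
  by (simp add: MH_vec_iter_component)

lemma norm_Hterm_le:
  "\<theta> \<in> Theta \<Longrightarrow> norm (Hterm lam p Xs q \<theta> n x) \<le> real CARD('d) * ((1 - doeblin) ^ n * 2)"
  by (rule norm_le_card_mult_cart) (simp add: Hterm_component abs_MH_op_iter_le H_centred_poisson)

lemma summable_Hterm_bound: "summable (\<lambda>n. real CARD('d) * ((1 - doeblin) ^ n * 2))"
  using summable_mult[OF summable_geometric_tail[OF doeblin_rate, where N = 0 and B = 2], of "real CARD('d)"]
  by simp

lemma summable_Hterm: "\<theta> \<in> Theta \<Longrightarrow> summable (\<lambda>n. Hterm lam p Xs q \<theta> n x)"
  by (rule summable_comparison_test'[OF summable_Hterm_bound]) (rule norm_Hterm_le)

lemma Hhat_component: "\<theta> \<in> Theta \<Longrightarrow> Hhat lam p Xs q \<theta> x $ i = poisson_sol \<theta> (H_centred \<theta> i) x"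
  unfolding Hhat_def poisson_sol_def bounded_linear.suminf[OF bounded_linear_vec_nth summable_Hterm]
  by (simp only: Hterm_component)

lemma MH_vec_Hhat_component:
  "\<theta> \<in> Theta \<Longrightarrow> MH_vec lam p Xs q \<theta> (Hhat lam p Xs q \<theta>) x $ i = P \<theta> (poisson_sol \<theta> (H_centred \<theta> i)) x"
  unfolding MH_vec_def Hhat_component by simp

lemma Hhat_uniform_limit:
  assumes "\<theta> \<in> Theta"
  shows "uniform_limit UNIV (\<lambda>N x. \<Sum>n<N. Hterm lam p Xs q \<theta> n x) (Hhat lam p Xs q \<theta>) sequentially"
proof -
  have "Hhat lam p Xs q \<theta> = (\<lambda>x. \<Sum>n. Hterm lam p Xs q \<theta> n x)" by (rule ext) (simp add: Hhat_def)
  then show ?thesis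
    using Weierstrass_m_test[OF norm_Hterm_le[OF assms] summable_Hterm_bound] by simp
qed

lemma Hhat_poisson_eq:
  assumes "\<theta> \<in> Theta"
  shows "Hhat lam p Xs q \<theta> x - MH_vec lam p Xs q \<theta> (Hhat lam p Xs q \<theta>) x
     = Hfun Xs x \<theta> - hmean lam p Xs \<theta>"
  unfolding vec_eq_iff
  using poisson_sol_eq[OF assms H_centred_poisson[OF assms]]
  by (simp add: Hhat_component[OF assms] MH_vec_Hhat_component[OF assms] H_centred_def)

lemma norm_Hhat_le: "\<theta> \<in> Theta \<Longrightarrow> norm (Hhat lam p Xs q \<theta> x) \<le> real CARD('d) * (2 / doeblin)"
  by (rule norm_le_card_mult_cart) (simp add: Hhat_component abs_poisson_sol_le H_centred_poisson)

section \<open>Lipschitz dependence on \<open>\<theta>\<close>\<close>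

definition "theta_min \<theta> \<theta>' = Min (range (\<lambda>i. min (\<theta> $ i) (\<theta>' $ i)))"

definition "rel_dist \<theta> \<theta>' = norm (\<theta> - \<theta>') / theta_min \<theta> \<theta>'"

definition "poisson_lip = (8 + 8 / doeblin) / doeblin + 4 / doeblin"

lemma poisson_lip_pos: "0 < poisson_lip"
  unfolding poisson_lip_def using doeblin(1) by (intro add_pos_pos divide_pos_pos) auto

lemma component_diff_le_norm: "\<bar>(\<theta>::real^'d) $ i - \<theta>' $ i\<bar> \<le> norm (\<theta> - \<theta>')"
  using component_le_norm_cart[of "\<theta> - \<theta>'" i] by simp

context
  fixes \<theta> \<theta>' :: "real^'d"
  assumes th: "\<theta> \<in> Theta" and th': "\<theta>' \<in> Theta"
begin

lemma theta_min: "0 < theta_min \<theta> \<theta>'" "theta_min \<theta> \<theta>' < 1"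
  "theta_min \<theta> \<theta>' \<le> \<theta> $ i" "theta_min \<theta> \<theta>' \<le> \<theta>' $ i"
proof -
  have "theta_min \<theta> \<theta>' \<in> range (\<lambda>i. min (\<theta> $ i) (\<theta>' $ i))"
    unfolding theta_min_def by (rule Min_in) auto
  then obtain j where j: "theta_min \<theta> \<theta>' = min (\<theta> $ j) (\<theta>' $ j)" by auto
  show "0 < theta_min \<theta> \<theta>'" "theta_min \<theta> \<theta>' < 1"
    unfolding j using Theta_pos[OF th] Theta_pos[OF th'] Theta_less_1[OF th, of j] by auto
  have "theta_min \<theta> \<theta>' \<le> min (\<theta> $ i) (\<theta>' $ i)" unfolding theta_min_def by (rule Min_le) auto
  then show "theta_min \<theta> \<theta>' \<le> \<theta> $ i" "theta_min \<theta> \<theta>' \<le> \<theta>' $ i" by auto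
qed

lemma rel_dist_nonneg: "0 \<le> rel_dist \<theta> \<theta>'"
  unfolding rel_dist_def using theta_min(1) by simp

lemma norm_le_rel_dist: "norm (\<theta> - \<theta>') \<le> rel_dist \<theta> \<theta>'"
  unfolding rel_dist_def using theta_min(1,2) by (simp add: le_divide_eq mult_left_le)

lemma component_diff_le_rel_dist:
  assumes "theta_min \<theta> \<theta>' \<le> m"
  shows "\<bar>\<theta> $ i - \<theta>' $ i\<bar> / m \<le> rel_dist \<theta> \<theta>'"
  unfolding rel_dist_def using theta_min(1) assms component_diff_le_norm[of \<theta> i \<theta>']
  by (intro frac_le) auto

lemma MH_accept_lipschitz:
  "\<bar>MH_accept lam p Xs \<theta> x y - MH_accept lam p Xs \<theta>' x y\<bar> \<le> 2 * rel_dist \<theta> \<theta>'"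
proof -
  let ?i = "cellidx Xs x" and ?j = "cellidx Xs y" and ?t = "rel_dist \<theta> \<theta>'"
  define c where "c = p y / p x"
  have c: "0 \<le> c" unfolding c_def using p_pos by (simp add: less_imp_le)
  have ratio: "pit \<phi> y / pit \<phi> x = c * \<phi> $ ?i / \<phi> $ ?j" if "\<phi> \<in> Theta" for \<phi>
    unfolding pi_theta_eq[OF that] c_def using normalizer_pos[OF that] Theta_pos[OF that] p_pos[of x]
    by (simp add: field_simps)
  have pos: "0 < \<theta> $ k" "0 < \<theta>' $ k" for k using Theta_pos th th' by auto
  have step: "\<bar>\<theta> $ k - \<theta>' $ k\<bar> / max (\<theta> $ k) (\<theta>' $ k) \<le> ?t" for k
    using theta_min(3)[of k] by (intro component_diff_le_rel_dist) (simp add: le_max_iff_disj)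
  let ?m = "\<lambda>\<phi> \<psi>. min 1 (c * \<phi> $ ?i / \<psi> $ ?j)"
  have "\<bar>?m \<theta> \<theta> - ?m \<theta>' \<theta>'\<bar> \<le> \<bar>?m \<theta> \<theta> - ?m \<theta>' \<theta>\<bar> + \<bar>?m \<theta>' \<theta> - ?m \<theta>' \<theta>'\<bar>"
    using dist_triangle[of "?m \<theta> \<theta>" "?m \<theta>' \<theta>'" "?m \<theta>' \<theta>"] by (simp add: dist_real_def)
  also have "\<bar>?m \<theta> \<theta> - ?m \<theta>' \<theta>\<bar> \<le> ?t"
    using min_one_mult_diff_le[of "c / \<theta> $ ?j" "\<theta> $ ?i" "\<theta>' $ ?i"] c pos[of ?j] pos[of ?i]
    by (intro order_trans[OF _ step[of ?i]]) simp
  also have "\<bar>?m \<theta>' \<theta> - ?m \<theta>' \<theta>'\<bar> \<le> ?t"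
    using min_one_divide_diff_le[of "c * \<theta>' $ ?i" "\<theta> $ ?j" "\<theta>' $ ?j"] c pos[of ?j] pos[of ?i]
    by (intro order_trans[OF _ step[of ?j]]) simp
  finally show ?thesis
    unfolding MH_accept_def ratio[OF th] ratio[OF th'] by simp
qed

lemma accept_dens_lipschitz: "\<bar>accept_dens \<theta> x y - accept_dens \<theta>' x y\<bar> \<le> 2 * rel_dist \<theta> \<theta>' * q x y"
  unfolding accept_dens_def left_diff_distrib[symmetric] abs_mult
  using mult_right_mono[OF MH_accept_lipschitz q_nonneg] q_nonneg by simp

lemma MH_op_lipschitz:
  assumes f: "bounded_meas f" and B: "\<And>x. \<bar>f x\<bar> \<le> B"
  shows "\<bar>P \<theta> f x - P \<theta>' f x\<bar> \<le> 4 * rel_dist \<theta> \<theta>' * B"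
proof -
  let ?t = "rel_dist \<theta> \<theta>'" and ?k = "accept_dens \<theta> x" and ?k' = "accept_dens \<theta>' x"
  have B0: "0 \<le> B" using B[of x] by linarith
  have "\<bar>(\<integral>y. f y * ?k y \<partial>lam) - (\<integral>y. f y * ?k' y \<partial>lam)\<bar> \<le> (\<integral>y. (2 * ?t * B) * q x y \<partial>lam)"
  proof -
    have "\<bar>f y * ?k y - f y * ?k' y\<bar> \<le> (2 * ?t * B) * q x y" for y
      using mult_mono[OF B[of y] accept_dens_lipschitz[of x y]] B0
      by (simp add: abs_mult right_diff_distrib[symmetric] mult_ac)
    then show ?thesis
      using abs_integral_le_integral[of lam "\<lambda>y. f y * ?k y - f y * ?k' y" "\<lambda>y. (2 * ?t * B) * q x y"] q_int[of x]
        integrable_mult_accept_dens[OF th f] integrable_mult_accept_dens[OF th' f]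
        Bochner_Integration.integral_diff[OF integrable_mult_accept_dens[OF th f] integrable_mult_accept_dens[OF th' f]]
      by simp
  qed
  moreover have "\<bar>(\<integral>y. ?k y \<partial>lam) - (\<integral>y. ?k' y \<partial>lam)\<bar> \<le> (\<integral>y. (2 * ?t) * q x y \<partial>lam)"
    using abs_integral_le_integral[of lam "\<lambda>y. ?k y - ?k' y" "\<lambda>y. (2 * ?t) * q x y"] q_int[of x]
      accept_dens_integrable[OF th] accept_dens_integrable[OF th'] accept_dens_lipschitz
      Bochner_Integration.integral_diff[OF accept_dens_integrable[OF th] accept_dens_integrable[OF th']]
    by simp
  ultimately have "\<bar>(\<integral>y. f y * ?k y \<partial>lam) - (\<integral>y. f y * ?k' y \<partial>lam)\<bar> \<le> 2 * ?t * B"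
    "\<bar>((\<integral>y. ?k y \<partial>lam) - (\<integral>y. ?k' y \<partial>lam)) * f x\<bar> \<le> 2 * ?t * B"
    using q_dens[of x] B[of x] B0 rel_dist_nonneg by (auto simp: abs_mult intro: mult_mono)
  moreover have "P \<theta> f x - P \<theta>' f x = ((\<integral>y. f y * ?k y \<partial>lam) - (\<integral>y. f y * ?k' y \<partial>lam))
      - ((\<integral>y. ?k y \<partial>lam) - (\<integral>y. ?k' y \<partial>lam)) * f x"
    unfolding MH_op_eq by (simp add: algebra_simps)
  ultimately show ?thesis by linarith
qed

lemma sum_cell_weights_diff_le:
  "(\<Sum>i\<in>UNIV. ts $ i * \<bar>1 / (\<theta> $ i * normalizer \<theta>) - 1 / (\<theta>' $ i * normalizer \<theta>')\<bar>)
     \<le> 2 * rel_dist \<theta> \<theta>'"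
proof -
  let ?t = "rel_dist \<theta> \<theta>'"
  define a where "a \<phi> i = ts $ i / \<phi> $ i" for \<phi> :: "real^'d" and i
  have pos: "0 < \<theta> $ k" "0 < \<theta>' $ k" "0 < ts $ k" for k using Theta_pos th th' A1_ts by auto
  have N: "normalizer \<phi> = sum (a \<phi>) UNIV" for \<phi> unfolding normalizer_def a_def ..
  have a_pos: "0 < a \<phi> i" if "\<phi> \<in> Theta" for \<phi> i
    unfolding a_def using A1_ts Theta_pos[OF that] by simp
  have "a \<theta> i / normalizer \<theta> - a \<theta>' i / normalizer \<theta>'
      = ts $ i * (1 / (\<theta> $ i * normalizer \<theta>) - 1 / (\<theta>' $ i * normalizer \<theta>'))" for i
    by (simp add: a_def right_diff_distrib)
  then have "(\<Sum>i\<in>UNIV. ts $ i * \<bar>1 / (\<theta> $ i * normalizer \<theta>) - 1 / (\<theta>' $ i * normalizer \<theta>')\<bar>)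
      = (\<Sum>i\<in>UNIV. \<bar>a \<theta> i / sum (a \<theta>) UNIV - a \<theta>' i / sum (a \<theta>') UNIV\<bar>)"
    unfolding N[symmetric] using pos by (intro sum.cong refl) (simp add: abs_mult abs_of_pos)
  also have "\<dots> \<le> 2 * (\<Sum>i\<in>UNIV. \<bar>a \<theta> i - a \<theta>' i\<bar>) / sum (a \<theta>) UNIV"
    using a_pos[OF th'] normalizer_pos[OF th] normalizer_pos[OF th'] unfolding N
    by (intro sum_abs_normalised_diff_le) (auto intro: less_imp_le)
  also have "\<dots> \<le> 2 * (sum (a \<theta>) UNIV * ?t) / sum (a \<theta>) UNIV"
  proof (intro divide_right_mono mult_left_mono sum_mono)
    have "\<bar>a \<theta> i - a \<theta>' i\<bar> \<le> a \<theta> i * ?t" for i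
    proof -
      have "a \<theta> i - a \<theta>' i = a \<theta> i * ((\<theta>' $ i - \<theta> $ i) / \<theta>' $ i)"
        unfolding a_def using pos[of i] by (simp add: field_simps)
      then have "\<bar>a \<theta> i - a \<theta>' i\<bar> = a \<theta> i * (\<bar>\<theta> $ i - \<theta>' $ i\<bar> / \<theta>' $ i)"
        using pos[of i] by (simp add: a_def abs_mult abs_minus_commute)
      also have "\<dots> \<le> a \<theta> i * ?t"
        using component_diff_le_rel_dist[OF theta_min(4)] a_pos[OF th, of i] by (intro mult_left_mono) auto
      finally show ?thesis .
    qed
    then show "(\<Sum>i\<in>UNIV. \<bar>a \<theta> i - a \<theta>' i\<bar>) \<le> sum (a \<theta>) UNIV * ?t"
      by (simp add: sum_distrib_right sum_mono)
  qed (use normalizer_pos[OF th] in \<open>auto simp: N\<close>)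
  also have "\<dots> = 2 * ?t" using normalizer_pos[OF th] unfolding N by simp
  finally show ?thesis .
qed

lemma pi_int_lipschitz:
  assumes f: "bounded_meas f" and B: "\<And>x. \<bar>f x\<bar> \<le> B"
  shows "\<bar>pi_int \<theta> f - pi_int \<theta>' f\<bar> \<le> 2 * rel_dist \<theta> \<theta>' * B"
proof -
  define F where "F i = (\<integral>x. p x * (indicator (Xs i) x * f x) \<partial>lam)" for i
  define w where "w \<phi> i = 1 / (\<phi> $ i * normalizer \<phi>)" for \<phi> :: "real^'d" and i
  have B0: "0 \<le> B" using B[of undefined] by linarith
  have F: "\<bar>F i\<bar> \<le> B * ts $ i" for i
  proof -
    have "\<bar>F i\<bar> \<le> B * (\<integral>x. p x * indicator (Xs i) x \<partial>lam)"
      unfolding F_def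
      using abs_integral_bounded_mult_le[OF integrable_p_mult[OF bounded_meas_indicator_mult[OF bounded_meas_const]],
          of i 1 f B] p_nonneg f B unfolding bounded_meas_def by (simp add: mult_ac)
    then show ?thesis unfolding theta_star_eq_integral .
  qed
  have pf: "pi_int \<phi> f = (\<Sum>i\<in>UNIV. F i * w \<phi> i)" if "\<phi> \<in> Theta" for \<phi>
    unfolding pi_int_eq_cells[OF that f] F_def[symmetric] w_def sum_divide_distrib
    using normalizer_pos[OF that] Theta_pos[OF that] by (intro sum.cong refl) (simp add: field_simps)
  have "\<bar>pi_int \<theta> f - pi_int \<theta>' f\<bar> \<le> (\<Sum>i\<in>UNIV. \<bar>F i\<bar> * \<bar>w \<theta> i - w \<theta>' i\<bar>)"
    unfolding pf[OF th] pf[OF th'] sum_subtractf[symmetric] right_diff_distrib[symmetric] abs_mult[symmetric]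
    by (rule sum_abs)
  also have "\<dots> \<le> (\<Sum>i\<in>UNIV. B * (ts $ i * \<bar>w \<theta> i - w \<theta>' i\<bar>))"
    using F by (intro sum_mono) (metis abs_ge_zero mult_right_mono mult.assoc)
  also have "\<dots> \<le> B * (2 * rel_dist \<theta> \<theta>')"
    unfolding sum_distrib_left[symmetric] w_def by (rule mult_left_mono[OF sum_cell_weights_diff_le B0])
  finally show ?thesis by (simp add: mult_ac)
qed

lemma Hfun_component_lipschitz: "\<bar>Hfun Xs x \<theta> $ i - Hfun Xs x \<theta>' $ i\<bar> \<le> 3 * norm (\<theta> - \<theta>')"
proof -
  let ?I = "indicator (Xs i) x :: real" and ?k = "cellidx Xs x" and ?d = "norm (\<theta> - \<theta>')"
  have I: "0 \<le> ?I" "?I \<le> 1" by (simp_all add: indicator_def)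
  have small: "\<bar>\<theta> $ k - \<theta>' $ k\<bar> \<le> ?d" for k by (rule component_diff_le_norm)
  have unit: "0 \<le> \<phi> $ k" "\<phi> $ k \<le> 1" if "\<phi> \<in> Theta" for \<phi> k
    using Theta_pos[OF that, of k] Theta_less_1[OF that, of k] by auto
  have "Hfun Xs x \<theta> $ i - Hfun Xs x \<theta>' $ i
      = (\<theta> $ i - \<theta>' $ i) * ?I - (\<theta> $ i - \<theta>' $ i) * \<theta> $ ?k - \<theta>' $ i * (\<theta> $ ?k - \<theta>' $ ?k)"
    unfolding Hfun_component by (simp add: algebra_simps)
  moreover have "\<bar>(\<theta> $ i - \<theta>' $ i) * ?I\<bar> \<le> ?d * 1" "\<bar>(\<theta> $ i - \<theta>' $ i) * \<theta> $ ?k\<bar> \<le> ?d * 1"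
    "\<bar>\<theta>' $ i * (\<theta> $ ?k - \<theta>' $ ?k)\<bar> \<le> 1 * ?d"
    unfolding abs_mult using I small unit[OF th] unit[OF th'] by (intro mult_mono; simp)+
  ultimately show ?thesis by linarith
qed

lemma hmean_component_lipschitz:
  "\<bar>hmean lam p Xs \<theta> $ i - hmean lam p Xs \<theta>' $ i\<bar> \<le> 5 * rel_dist \<theta> \<theta>'"
proof -
  let ?H = "\<lambda>\<phi> x. Hfun Xs x \<phi> $ i"
  have "\<bar>pi_int \<theta> (?H \<theta>) - pi_int \<theta>' (?H \<theta>)\<bar> \<le> 2 * rel_dist \<theta> \<theta>' * 1"
    by (rule pi_int_lipschitz[OF bounded_meas_Hfun_component[OF th] abs_Hfun_component_le[OF th]])
  moreover have "\<bar>pi_int \<theta>' (\<lambda>x. ?H \<theta> x - ?H \<theta>' x)\<bar> \<le> 3 * norm (\<theta> - \<theta>')"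
    by (rule abs_pi_int_le[OF th' bounded_meas_diff[OF bounded_meas_Hfun_component[OF th]
          bounded_meas_Hfun_component[OF th']] Hfun_component_lipschitz])
  ultimately show ?thesis
    unfolding hmean_component[OF th] hmean_component[OF th']
      pi_int_diff[OF th' bounded_meas_Hfun_component[OF th] bounded_meas_Hfun_component[OF th']]
    using norm_le_rel_dist by linarith
qed

lemma H_centred_lipschitz: "\<bar>H_centred \<theta> i x - H_centred \<theta>' i x\<bar> \<le> 8 * rel_dist \<theta> \<theta>'"
  unfolding H_centred_def
  using Hfun_component_lipschitz[of x i] hmean_component_lipschitz[of i] norm_le_rel_dist by linarith

text \<open>Perturbation of the Poisson solution: \<open>v = u - u'\<close> solves a Poisson equation for \<open>P \<theta>\<close>
  whose right-hand side is small because \<open>P \<theta>\<close> and \<open>P \<theta>'\<close> are close, and its \<open>\<pi>\<^sub>\<theta>\<close>-mean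
  \<open>- pi_int \<theta> u' = pi_int \<theta>' u' - pi_int \<theta> u'\<close> is small because \<open>\<pi>\<^sub>\<theta>\<close> and \<open>\<pi>\<^sub>\<theta>\<^sub>'\<close> are close.\<close>
lemma poisson_sol_lipschitz:
  assumes g: "bounded_meas g" "\<And>x. \<bar>g x\<bar> \<le> B" "pi_int \<theta> g = 0"
    and g': "bounded_meas g'" "\<And>x. \<bar>g' x\<bar> \<le> B" "pi_int \<theta>' g' = 0"
    and close: "\<And>x. \<bar>g x - g' x\<bar> \<le> \<delta>"
  shows "\<bar>poisson_sol \<theta> g x - poisson_sol \<theta>' g' x\<bar>
    \<le> (\<delta> + 4 * rel_dist \<theta> \<theta>' * (B / doeblin)) / doeblin + 2 * rel_dist \<theta> \<theta>' * (B / doeblin)"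
proof -
  let ?u = "poisson_sol \<theta> g" and ?u' = "poisson_sol \<theta>' g'" and ?t = "rel_dist \<theta> \<theta>'"
  note u = bounded_meas_poisson_sol[OF th g] abs_poisson_sol_le[OF th g] poisson_sol_eq[OF th g]
    pi_int_poisson_sol[OF th g]
  note u' = bounded_meas_poisson_sol[OF th' g'] abs_poisson_sol_le[OF th' g'] poisson_sol_eq[OF th' g']
    pi_int_poisson_sol[OF th' g']
  define v where "v y = ?u y - ?u' y" for y
  have v: "bounded_meas v" unfolding v_def by (rule bounded_meas_diff[OF u(1) u'(1)])
  have "\<bar>v y - P \<theta> v y\<bar> \<le> \<delta> + 4 * ?t * (B / doeblin)" for y
  proof -
    have "v y - P \<theta> v y = (g y - g' y) + (P \<theta> ?u' y - P \<theta>' ?u' y)"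
      unfolding v_def MH_op_diff[OF th u(1) u'(1)] using u(3)[of y] u'(3)[of y] by simp
    then show ?thesis using close[of y] MH_op_lipschitz[OF u'(1,2), of y] by linarith
  qed
  then have "\<bar>v x - pi_int \<theta> v\<bar> \<le> (\<delta> + 4 * ?t * (B / doeblin)) / doeblin"
    by (intro abs_centred_le_of_poisson_eq[OF th v]) auto
  moreover have "pi_int \<theta> v = pi_int \<theta>' ?u' - pi_int \<theta> ?u'"
    unfolding v_def pi_int_diff[OF th u(1) u'(1)] u(4) u'(4) by simp
  moreover have "\<bar>pi_int \<theta>' ?u' - pi_int \<theta> ?u'\<bar> \<le> 2 * ?t * (B / doeblin)"
    using pi_int_lipschitz[OF u'(1,2)] by (simp add: abs_minus_commute)
  ultimately show ?thesis unfolding v_def by linarith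
qed

lemma poisson_sol_H_centred_lipschitz:
  shows "\<bar>poisson_sol \<theta> (H_centred \<theta> i) x - poisson_sol \<theta>' (H_centred \<theta>' i) x\<bar> \<le> poisson_lip * rel_dist \<theta> \<theta>'"
    and "\<bar>P \<theta> (poisson_sol \<theta> (H_centred \<theta> i)) x - P \<theta>' (poisson_sol \<theta>' (H_centred \<theta>' i)) x\<bar>
      \<le> (poisson_lip + 8) * rel_dist \<theta> \<theta>'"
proof -
  have "\<bar>poisson_sol \<theta> (H_centred \<theta> i) x - poisson_sol \<theta>' (H_centred \<theta>' i) x\<bar>
      \<le> (8 * rel_dist \<theta> \<theta>' + 4 * rel_dist \<theta> \<theta>' * (2 / doeblin)) / doeblin + 2 * rel_dist \<theta> \<theta>' * (2 / doeblin)"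
    by (rule poisson_sol_lipschitz[OF H_centred_poisson[OF th] H_centred_poisson[OF th'] H_centred_lipschitz])
  also have "\<dots> = poisson_lip * rel_dist \<theta> \<theta>'"
    unfolding poisson_lip_def using doeblin(1) by (simp add: field_simps)
  finally show first: "\<bar>poisson_sol \<theta> (H_centred \<theta> i) x - poisson_sol \<theta>' (H_centred \<theta>' i) x\<bar>
      \<le> poisson_lip * rel_dist \<theta> \<theta>'" .
  show "\<bar>P \<theta> (poisson_sol \<theta> (H_centred \<theta> i)) x - P \<theta>' (poisson_sol \<theta>' (H_centred \<theta>' i)) x\<bar>
      \<le> (poisson_lip + 8) * rel_dist \<theta> \<theta>'"
    using first H_centred_lipschitz[of i x]
      poisson_sol_eq[OF th H_centred_poisson[OF th, of i], where x = x]
      poisson_sol_eq[OF th' H_centred_poisson[OF th', of i], where x = x]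
    by (simp add: distrib_right)
qed

lemma Hhat_lipschitz:
  "norm (Hhat lam p Xs q \<theta> x - Hhat lam p Xs q \<theta>' x)
     + norm (MH_vec lam p Xs q \<theta> (Hhat lam p Xs q \<theta>) x - MH_vec lam p Xs q \<theta>' (Hhat lam p Xs q \<theta>') x)
   \<le> real CARD('d) * (2 * poisson_lip + 8) * rel_dist \<theta> \<theta>'"
proof -
  have "norm (Hhat lam p Xs q \<theta> x - Hhat lam p Xs q \<theta>' x) \<le> real CARD('d) * (poisson_lip * rel_dist \<theta> \<theta>')"
    by (rule norm_le_card_mult_cart)
      (simp add: Hhat_component[OF th] Hhat_component[OF th'] poisson_sol_H_centred_lipschitz(1))
  moreover have "norm (MH_vec lam p Xs q \<theta> (Hhat lam p Xs q \<theta>) x - MH_vec lam p Xs q \<theta>' (Hhat lam p Xs q \<theta>') x)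
      \<le> real CARD('d) * ((poisson_lip + 8) * rel_dist \<theta> \<theta>')"
    by (rule norm_le_card_mult_cart)
      (simp add: MH_vec_Hhat_component[OF th] MH_vec_Hhat_component[OF th'] poisson_sol_H_centred_lipschitz(2))
  ultimately show ?thesis by (simp add: algebra_simps)
qed

end

end

theorem mainTheorem15:
  fixes lam :: "('a::polish_space) measure"
    and p :: "'a \<Rightarrow> real"
    and Xs :: "'d::finite \<Rightarrow> 'a set"
    and q :: "'a \<Rightarrow> 'a \<Rightarrow> real"
  assumes d2: "CARD('d) \<ge> 2"
    and lam_borel: "sets lam = sets borel"
    and lam_sf: "sigma_finite_measure lam"
    and p_meas: "p \<in> borel_measurable lam"
    and p_nonneg: "\<And>x. 0 \<le> p x"
    and p_int: "integrable lam p"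
    and p_one: "(\<integral>x. p x \<partial>lam) = 1"
    and Xs_meas: "\<And>i. Xs i \<in> sets lam"
    and Xs_disj: "\<And>i j. i \<noteq> j \<Longrightarrow> Xs i \<inter> Xs j = {}"
    and Xs_cover: "(\<Union>i. Xs i) = UNIV"
    and A1_inf: "\<exists>c>0. \<forall>x. c \<le> p x"
    and A1_sup: "\<exists>C. \<forall>x. p x \<le> C"
    and A1_ts: "\<And>i. 0 < theta_star lam p Xs $ i"
    and q_meas: "(\<lambda>(x, y). q x y) \<in> borel_measurable (lam \<Otimes>\<^sub>M lam)"
    and q_sym: "\<And>x y. q x y = q y x"
    and q_nonneg: "\<And>x y. 0 \<le> q x y"
    and q_int: "\<And>x. integrable lam (q x)"
    and q_dens: "\<And>x. (\<integral>y. q x y \<partial>lam) = 1"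
    and q_inf: "\<exists>c>0. \<forall>x y. c \<le> q x y"
  shows
    "(\<forall>\<theta>\<in>Theta.
        uniform_limit UNIV (\<lambda>N x. \<Sum>n<N. Hterm lam p Xs q \<theta> n x)
                      (Hhat lam p Xs q \<theta>) sequentially
      \<and> (\<forall>x. Hhat lam p Xs q \<theta> x - MH_vec lam p Xs q \<theta> (Hhat lam p Xs q \<theta>) x
               = Hfun Xs x \<theta> - hmean lam p Xs \<theta>))
     \<and> (\<exists>B. \<forall>\<theta>\<in>Theta. \<forall>x. norm (Hhat lam p Xs q \<theta> x) \<le> B)
     \<and> (\<exists>C>0. \<forall>\<theta>\<in>Theta. \<forall>\<theta>'\<in>Theta. \<forall>x.
          norm (Hhat lam p Xs q \<theta> x - Hhat lam p Xs q \<theta>' x)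
          + norm (MH_vec lam p Xs q \<theta> (Hhat lam p Xs q \<theta>) x
                  - MH_vec lam p Xs q \<theta>' (Hhat lam p Xs q \<theta>') x)
          \<le> C * norm (\<theta> - \<theta>') / Min (range (\<lambda>i. min (\<theta>$i) (\<theta>'$i))))"
proof -
  interpret mh_setting lam p Xs q
    by (rule mh_setting.intro) (fact assms)+
  let ?C = "real CARD('d) * (2 * poisson_lip + 8)"
  have "?C * norm (\<theta> - \<theta>') / Min (range (\<lambda>i. min (\<theta>$i) (\<theta>'$i))) = ?C * rel_dist \<theta> \<theta>'"
    for \<theta> \<theta>' :: "real^'d"
    unfolding rel_dist_def theta_min_def by simp
  then have "\<exists>C>0. \<forall>\<theta>\<in>Theta. \<forall>\<theta>'\<in>Theta. \<forall>x.
          norm (Hhat lam p Xs q \<theta> x - Hhat lam p Xs q \<theta>' x)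
          + norm (MH_vec lam p Xs q \<theta> (Hhat lam p Xs q \<theta>) x
                  - MH_vec lam p Xs q \<theta>' (Hhat lam p Xs q \<theta>') x)
          \<le> C * norm (\<theta> - \<theta>') / Min (range (\<lambda>i. min (\<theta>$i) (\<theta>'$i)))"
    using Hhat_lipschitz poisson_lip_pos by (intro exI[of _ ?C]) (auto simp: mult.assoc)
  then show ?thesis
    using Hhat_uniform_limit Hhat_poisson_eq norm_Hhat_le by blast
qed

end
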